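(* Let $a,d\in\mathbb N$ and let $\chi\in M(d)_\mathbb R$ be strictly dominant with $\chi\in\mathbf V^a(1,d)$. Then there exists a unique integer $0\le e\le d$ such that \[ \chi=\sum_{j<i\le e}c_{ij}(\beta_i-\beta_j)+\sum_{e<j<i}c_{ij}(\beta_i-\beta_j)+\sum_{j\le e<i}\tfrac32(\beta_i-\beta_j)+\sum_{1\le i\le d}c_i\beta_i \] for some real numbers with $0\le c_{ij}\le\frac32$ for $j<i$, $-\frac{a+2}{2}\le c_i\le-\frac a2$ for $i\le e$, and $-\frac a2<c_i\le\frac a2$ for $i>e$. Equivalently, with $f:=d-e$, \[ \chi\in\Big(-\tfrac{a+3f}{2}\sigma_e+\mathbf V(e)\Big)+\Big(\tfrac{3e}{2}\sigma_f+\mathbf W^a(1,f)\Big), \] where $M(e)\oplus M(f)$ is identified with $M(d)$ via the first $e$ and the last $f$ coordinates.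
   Context: $M(n)$ is the character lattice of the diagonal torus of $GL(n)$ with coordinate characters $\beta_1,\dots,\beta_n$; $\chi=\sum b_i\beta_i$ is strictly dominant if $b_1<\dots<b_n$. $\sigma_n=\sum_i\beta_i$. Minkowski sums below run over all $1\le i,j\le n$ and $1\le k\le n$: $\mathbf V(n):=\frac32\mathrm{sum}[0,\beta_i-\beta_j]+\mathrm{sum}[-\beta_k,0]$; $\mathbf W^a(1,n):=\frac32\mathrm{sum}[0,\beta_i-\beta_j]+\frac a2\mathrm{sum}(-\beta_k,\beta_k]$ (half-open segments); $\mathbf V^a(1,n):=\frac32\mathrm{sum}[0,\beta_i-\beta_j]+\frac a2\mathrm{sum}[-\beta_k,\beta_k]+\mathrm{sum}[-\beta_k,0]$. *)

theory Defs
  imports Main "HOL-Library.Set_Algebras" Complex_Main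
begin

text \<open>Elements of M(n)_R are represented as functions nat => real, of which only the
coordinates 1..n are relevant.  The coordinate character beta_i is the i-th unit vector.\<close>

definition beta :: "nat \<Rightarrow> nat \<Rightarrow> real" where
  "beta i = (\<lambda>k. if k = i then 1 else 0)"

definition strictly_dominant :: "nat \<Rightarrow> (nat \<Rightarrow> real) \<Rightarrow> bool" where
  "strictly_dominant n \<chi> \<longleftrightarrow> (\<forall>i j. 1 \<le> i \<longrightarrow> i < j \<longrightarrow> j \<le> n \<longrightarrow> \<chi> i < \<chi> j)"

definition eqM :: "nat \<Rightarrow> (nat \<Rightarrow> real) \<Rightarrow> (nat \<Rightarrow> real) \<Rightarrow> bool" where
  "eqM n x y \<longleftrightarrow> (\<forall>m\<in>{1..n}. x m = y m)"

text \<open>V^a(1,n) = 3/2 sum_{i,j} [0, beta_i - beta_j] + a/2 sum_k [-beta_k, beta_k] + sum_k [-beta_k, 0]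
  (Minkowski sums of segments, i,j,k ranging over 1..n), unfolded: a point of a Minkowski sum
  of segments [p,q] is a sum of points p + t (q - p) with t in [0,1].\<close>
definition V_a_1 :: "nat \<Rightarrow> nat \<Rightarrow> (nat \<Rightarrow> real) set" where
  "V_a_1 a n = {\<chi>. \<exists>t s u.
      (\<forall>i j. 0 \<le> t i j \<and> t i j \<le> 1) \<and>
      (\<forall>k. 0 \<le> s k \<and> s k \<le> 1) \<and>
      (\<forall>k. 0 \<le> u k \<and> u k \<le> 1) \<and>
      eqM n \<chi> (\<lambda>m.
          (\<Sum>i\<in>{1..n}. \<Sum>j\<in>{1..n}. t i j * (3/2 * (beta i m - beta j m)))
        + (\<Sum>k\<in>{1..n}. (- (real a / 2) * beta k m) + s k * (real a * beta k m))
        + (\<Sum>k\<in>{1..n}. (- beta k m) + u k * beta k m))}"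

end

theory Submission
  imports Defs
begin

text \<open>
  Put \<open>\<Phi>(w) = \<chi>\<^sub>1 + ... + \<chi>\<^sub>w - \<psi>(w)\<close>, where \<open>\<psi>(w) = -(3/2) w (d - w) - (a/2) w\<close> is the
  value of this partial sum at the extreme decomposition with cut \<open>w\<close>. A decomposition with
  cut \<open>e\<close> forces \<open>\<Phi>(v) \<ge> \<Phi>(e)\<close> for \<open>v < e\<close> and \<open>\<Phi>(v) > \<Phi>(e)\<close> for \<open>v > e\<close>, so \<open>e\<close> is the last
  minimiser of \<open>\<Phi>\<close>; this gives uniqueness. Conversely, let \<open>e\<close> be the last minimiser. After
  removing the cross terms, each of the two blocks of the monotone vector \<open>\<chi>\<close> satisfies
  tail inequalities, which come from the minimality of \<open>\<Phi>(e)\<close> and from the bounds on partial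
  sums over \<open>V\<^sup>a(1,d)\<close>. Such a monotone vector is a point of the zonotope
  \<open>3/2 \<Sum>\<^sub>j\<^sub><\<^sub>i [0, \<beta>\<^sub>i - \<beta>\<^sub>j]\<close> plus a vector with coordinates in the prescribed box: clip it into
  the box at a suitable level, and then split off the coefficients of the last coordinate by
  induction, again by clipping at a suitable level.
\<close>

lemma sum_greaterThanAtMost_concat:
  fixes f :: "nat \<Rightarrow> 'a::comm_monoid_add"
  assumes "a \<le> b" "b \<le> c"
  shows "(\<Sum>j\<in>{a<..c}. f j) = (\<Sum>j\<in>{a<..b}. f j) + (\<Sum>j\<in>{b<..c}. f j)"
proof -
  have "{a<..c} = {a<..b} \<union> {b<..c}"
    using assms by auto
  then show ?thesis
    by (simp add: sum.union_disjoint[symmetric] ivl_disj_int)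
qed

lemma sum_greaterThanAtMost_Suc:
  fixes f :: "nat \<Rightarrow> 'a::comm_monoid_add"
  assumes "a \<le> b"
  shows "(\<Sum>j\<in>{a<..Suc b}. f j) = (\<Sum>j\<in>{a<..b}. f j) + f (Suc b)"
proof -
  have "{a<..Suc b} = insert (Suc b) {a<..b}"
    using assms by auto
  then show ?thesis
    by (simp add: add.commute)
qed

lemma sum_const_greaterThanAtMost: "v \<le> w \<Longrightarrow> (\<Sum>m\<in>{v<..w}. (K::real)) = (real w - real v) * K"
  by (simp add: of_nat_diff)

lemma sum_triangle_swap:
  fixes f :: "nat \<Rightarrow> nat \<Rightarrow> 'a::comm_monoid_add"
  shows "(\<Sum>m\<in>{v<..w}. \<Sum>j\<in>{v<..<m}. f m j) = (\<Sum>j\<in>{v<..w}. \<Sum>m\<in>{j<..w}. f m j)"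
proof -
  have "(\<Sum>m\<in>{v<..w}. \<Sum>j\<in>{v<..<m}. f m j) = (\<Sum>m\<in>{v<..w}. \<Sum>j\<in>{j\<in>{v<..w}. j < m}. f m j)"
    by (intro sum.cong) auto
  also have "\<dots> = (\<Sum>j\<in>{v<..w}. \<Sum>m\<in>{m\<in>{v<..w}. j < m}. f m j)"
    by (rule sum.swap_restrict) auto
  also have "\<dots> = (\<Sum>j\<in>{v<..w}. \<Sum>m\<in>{j<..w}. f m j)"
    by (intro sum.cong) auto
  finally show ?thesis .
qed

lemma net_flow_out_of_subset:
  fixes T :: "'a \<Rightarrow> 'a \<Rightarrow> 'b::ab_group_add"
  assumes "finite D" "S \<subseteq> D"
  shows "(\<Sum>m\<in>S. (\<Sum>j\<in>D. T m j) - (\<Sum>i\<in>D. T i m)) =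
    (\<Sum>m\<in>S. \<Sum>j\<in>D - S. T m j) - (\<Sum>m\<in>S. \<Sum>i\<in>D - S. T i m)"
proof -
  have split: "\<And>g. sum g D = sum g (D - S) + sum g S"
    using sum.subset_diff[OF assms(2,1)] by simp
  have "(\<Sum>m\<in>S. \<Sum>j\<in>S. T m j) = (\<Sum>m\<in>S. \<Sum>i\<in>S. T i m)"
    by (rule sum.swap)
  then show ?thesis
    by (simp add: split sum_subtractf sum.distrib)
qed

lemma ex_last_argmin:
  fixes f :: "nat \<Rightarrow> 'a::linorder"
  shows "\<exists>e\<le>d. (\<forall>v\<le>d. f e \<le> f v) \<and> (\<forall>v. e < v \<longrightarrow> v \<le> d \<longrightarrow> f e < f v)"
proof -
  define A where "A = {w. w \<le> d \<and> (\<forall>v\<le>d. f w \<le> f v)}"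
  have "Min (f ` {..d}) \<in> f ` {..d}"
    by (intro Min_in) auto
  then obtain w where "w \<le> d" "f w = Min (f ` {..d})"
    by (metis atMost_iff imageE)
  then have "w \<in> A"
    unfolding A_def by simp
  moreover have "finite A"
    unfolding A_def by auto
  ultimately have "Max A \<in> A" and Max_ge: "\<And>v. v \<in> A \<Longrightarrow> v \<le> Max A"
    by (auto intro: Max_in)
  moreover have "f (Max A) < f v" if "Max A < v" "v \<le> d" for v
  proof (rule ccontr)
    assume "\<not> f (Max A) < f v"
    with \<open>Max A \<in> A\<close> that have "v \<in> A"
      unfolding A_def by force
    with that show False
      using Max_ge by force
  qed
  ultimately show ?thesis
    unfolding A_def by blast
qed

section \<open>Coordinates of combinations of roots\<close>

lemma beta_apply: "beta i m = (if m = i then 1 else 0)"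
  by (simp add: beta_def)

lemma scaled_root_apply:
  "x * (beta i m - beta j m) = (if m = i then x else 0) - (if m = j then x else 0)"
  by (simp add: beta_apply)

definition root_sum :: "nat \<Rightarrow> nat \<Rightarrow> (nat \<Rightarrow> nat \<Rightarrow> real) \<Rightarrow> nat \<Rightarrow> real" where
  "root_sum p q c m = (\<Sum>j\<in>{p<..<m}. c m j) - (\<Sum>i\<in>{m<..q}. c i m)"

lemma root_combination_coord:
  "(\<Sum>i\<in>{p<..q}. \<Sum>j\<in>{p<..<i}. c i j * (beta i m - beta j m)) =
    (if m \<in> {p<..q} then root_sum p q c m else 0)"
proof -
  have "(\<Sum>i\<in>{p<..q}. \<Sum>j\<in>{p<..<i}. c i j * (beta i m - beta j m)) =
      (\<Sum>i\<in>{p<..q}. \<Sum>j\<in>{p<..<i}. if m = i then c i j else 0)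
    - (\<Sum>i\<in>{p<..q}. \<Sum>j\<in>{p<..<i}. if m = j then c i j else 0)"
    by (simp only: scaled_root_apply sum_subtractf)
  also have "(\<Sum>i\<in>{p<..q}. \<Sum>j\<in>{p<..<i}. if m = i then c i j else 0) =
      (\<Sum>i\<in>{p<..q}. if m = i then \<Sum>j\<in>{p<..<i}. c i j else 0)"
    by (intro sum.cong) auto
  also have "(\<Sum>i\<in>{p<..q}. \<Sum>j\<in>{p<..<i}. if m = j then c i j else 0) =
      (\<Sum>i\<in>{p<..q}. if p < m \<and> m < i then c i m else 0)"
    by (intro sum.cong) (auto simp: sum.delta)
  also have "\<dots> = (if m \<in> {p<..q} then \<Sum>i\<in>{m<..q}. c i m else 0)"
    by (auto simp: sum.If_cases intro!: sum.cong) (auto intro!: sum.neutral)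
  finally show ?thesis
    by (simp add: root_sum_def sum.delta)
qed

lemma root_sum_update_top_row:
  assumes "p \<le> q" "m \<in> {p<..Suc q}"
  shows "root_sum p (Suc q) (c(Suc q := r)) m =
    (if m = Suc q then (\<Sum>j\<in>{p<..q}. r j) else root_sum p q c m - r m)"
proof (cases "m = Suc q")
  case True
  moreover have "{p<..<Suc q} = {p<..q}"
    by auto
  ultimately show ?thesis
    unfolding root_sum_def by simp
next
  case False
  with assms have "m \<le> q"
    by simp
  then have "(\<Sum>i\<in>{m<..Suc q}. (c(Suc q := r)) i m) = (\<Sum>i\<in>{m<..q}. c i m) + r m"
    by (simp add: sum_greaterThanAtMost_Suc)
  with False show ?thesis
    unfolding root_sum_def by simp
qed

lemma cross_terms_coord:
  assumes "e \<le> d" "m \<in> {1..d}"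
  shows "(\<Sum>i\<in>{e<..d}. \<Sum>j\<in>{1..e}. 3/2 * (beta i m - beta j m)) =
    (if m \<le> e then - (3/2 * (real d - real e)) else 3/2 * real e)"
proof -
  have "(\<Sum>i\<in>{e<..d}. \<Sum>j\<in>{1..e}. 3/2 * (beta i m - beta j m)) =
      (\<Sum>i\<in>{e<..d}. \<Sum>j\<in>{1..e}. if m = i then 3/2 else 0)
    - (\<Sum>i\<in>{e<..d}. \<Sum>j\<in>{1..e}. if m = j then 3/2 else 0)"
    by (simp only: scaled_root_apply sum_subtractf)
  also have "(\<Sum>i\<in>{e<..d}. \<Sum>j\<in>{1..e}. if m = i then (3/2::real) else 0) =
      (\<Sum>i\<in>{e<..d}. if m = i then 3/2 * real e else 0)"
    by (intro sum.cong refl) simp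
  also have "\<dots> = (if m \<le> e then 0 else 3/2 * real e)"
    using assms by (simp add: sum.delta)
  also have "(\<Sum>i\<in>{e<..d}. \<Sum>j\<in>{1..e}. if m = j then (3/2::real) else 0) =
      (\<Sum>i\<in>{e<..d}. if m \<le> e then 3/2 else 0)"
    using assms by (intro sum.cong refl) (simp add: sum.delta)
  also have "\<dots> = (if m \<le> e then 3/2 * (real d - real e) else 0)"
    using assms by (simp add: of_nat_diff)
  finally show ?thesis
    by simp
qed

lemma split_combination_coord:
  assumes "e \<le> d" "m \<in> {1..d}"
  shows "(\<Sum>i\<in>{1..e}. \<Sum>j\<in>{1..<i}. c i j * (beta i m - beta j m))
       + (\<Sum>i\<in>{e<..d}. \<Sum>j\<in>{e<..<i}. c i j * (beta i m - beta j m))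
       + (\<Sum>i\<in>{e<..d}. \<Sum>j\<in>{1..e}. 3/2 * (beta i m - beta j m))
       + (\<Sum>i\<in>{1..d}. ci i * beta i m)
    = (if m \<le> e then root_sum 0 e c m - 3/2 * (real d - real e)
       else root_sum e d c m + 3/2 * real e) + ci m"
proof -
  have "{1..e} = {0<..e}" "\<And>i::nat. {1..<i} = {0<..<i}"
    by auto
  then have "(\<Sum>i\<in>{1..e}. \<Sum>j\<in>{1..<i}. c i j * (beta i m - beta j m)) =
      (if m \<in> {0<..e} then root_sum 0 e c m else 0)"
    by (simp only: root_combination_coord)
  moreover have "(\<Sum>i\<in>{1..d}. ci i * beta i m) = ci m"
    using assms by (simp add: beta_apply if_distrib sum.delta cong: if_cong)
  ultimately show ?thesis
    unfolding root_combination_coord cross_terms_coord[OF assms] using assms by auto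
qed

definition split_decomp :: "nat \<Rightarrow> nat \<Rightarrow> (nat \<Rightarrow> real) \<Rightarrow> nat \<Rightarrow> bool" where
  "split_decomp a d \<chi> e \<longleftrightarrow>
    (\<exists>(c :: nat \<Rightarrow> nat \<Rightarrow> real) (ci :: nat \<Rightarrow> real).
       (\<forall>i j. 1 \<le> j \<longrightarrow> j < i \<longrightarrow> i \<le> d \<longrightarrow> 0 \<le> c i j \<and> c i j \<le> 3/2) \<and>
       (\<forall>i\<in>{1..e}. - (real a + 2) / 2 \<le> ci i \<and> ci i \<le> - real a / 2) \<and>
       (\<forall>i\<in>{e<..d}. - real a / 2 < ci i \<and> ci i \<le> real a / 2) \<and>
       eqM d \<chi> (\<lambda>m.
           (\<Sum>i\<in>{1..e}. \<Sum>j\<in>{1..<i}. c i j * (beta i m - beta j m))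
         + (\<Sum>i\<in>{e<..d}. \<Sum>j\<in>{e<..<i}. c i j * (beta i m - beta j m))
         + (\<Sum>i\<in>{e<..d}. \<Sum>j\<in>{1..e}. 3/2 * (beta i m - beta j m))
         + (\<Sum>i\<in>{1..d}. ci i * beta i m)))"

lemma split_decomp_iff_coords:
  assumes "e \<le> d"
  shows "split_decomp a d \<chi> e \<longleftrightarrow>
    (\<exists>c ci.
       (\<forall>i j. 1 \<le> j \<longrightarrow> j < i \<longrightarrow> i \<le> d \<longrightarrow> 0 \<le> c i j \<and> c i j \<le> 3/2) \<and>
       (\<forall>i\<in>{1..e}. - (real a + 2) / 2 \<le> ci i \<and> ci i \<le> - real a / 2) \<and>
       (\<forall>i\<in>{e<..d}. - real a / 2 < ci i \<and> ci i \<le> real a / 2) \<and>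
       (\<forall>m\<in>{1..d}. \<chi> m = (if m \<le> e then root_sum 0 e c m - 3/2 * (real d - real e)
                               else root_sum e d c m + 3/2 * real e) + ci m))"
  unfolding split_decomp_def eqM_def using split_combination_coord[OF assms] by simp

section \<open>Partial sums on \<open>V\<^sup>a(1,d)\<close>\<close>

lemma V_a_1_combination_coord:
  assumes "m \<in> {1..n}"
  shows "(\<Sum>i\<in>{1..n}. \<Sum>j\<in>{1..n}. t i j * (3/2 * (beta i m - beta j m)))
        + (\<Sum>k\<in>{1..n}. (- (real a / 2) * beta k m) + s k * (real a * beta k m))
        + (\<Sum>k\<in>{1..n}. (- beta k m) + u k * beta k m)
      = 3/2 * ((\<Sum>j\<in>{1..n}. t m j) - (\<Sum>i\<in>{1..n}. t i m)) + (s m * real a - real a / 2) + (u m - 1)"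
proof -
  have "(\<Sum>i\<in>{1..n}. \<Sum>j\<in>{1..n}. t i j * (3/2 * (beta i m - beta j m))) =
      (\<Sum>i\<in>{1..n}. \<Sum>j\<in>{1..n}. (3/2 * t i j) * (beta i m - beta j m))"
    by (intro sum.cong refl) simp
  also have "\<dots> = (\<Sum>i\<in>{1..n}. \<Sum>j\<in>{1..n}. if m = i then 3/2 * t i j else 0)
      - (\<Sum>i\<in>{1..n}. \<Sum>j\<in>{1..n}. if m = j then 3/2 * t i j else 0)"
    by (simp only: scaled_root_apply sum_subtractf)
  also have "(\<Sum>i\<in>{1..n}. \<Sum>j\<in>{1..n}. if m = i then 3/2 * t i j else 0) = 3/2 * (\<Sum>j\<in>{1..n}. t m j)"
  proof -
    have "(\<Sum>i\<in>{1..n}. \<Sum>j\<in>{1..n}. if m = i then 3/2 * t i j else 0) =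
        (\<Sum>i\<in>{1..n}. if m = i then \<Sum>j\<in>{1..n}. 3/2 * t i j else 0)"
      by (intro sum.cong) auto
    then show ?thesis
      using assms by (simp add: sum.delta sum_distrib_left)
  qed
  also have "(\<Sum>i\<in>{1..n}. \<Sum>j\<in>{1..n}. if m = j then 3/2 * t i j else 0) = 3/2 * (\<Sum>i\<in>{1..n}. t i m)"
    using assms by (simp add: sum.delta sum_distrib_left)
  moreover have "(\<Sum>k\<in>{1..n}. (- (real a / 2) * beta k m) + s k * (real a * beta k m)) =
      (\<Sum>k\<in>{1..n}. if m = k then s k * real a - real a / 2 else 0)"
    by (intro sum.cong refl) (simp add: beta_apply)
  moreover have "(\<Sum>k\<in>{1..n}. (- beta k m) + u k * beta k m) = (\<Sum>k\<in>{1..n}. if m = k then u k - 1 else 0)"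
    by (intro sum.cong refl) (simp add: beta_apply)
  ultimately show ?thesis
    using assms by (simp add: sum.delta algebra_simps)
qed

lemma V_a_1_coords:
  assumes "\<chi> \<in> V_a_1 a d"
  obtains t s u where "\<And>i j. 0 \<le> t i j \<and> t i j \<le> 1" "\<And>k. 0 \<le> s k \<and> s k \<le> 1"
    "\<And>k. 0 \<le> u k \<and> u k \<le> 1"
    "\<And>m. m \<in> {1..d} \<Longrightarrow>
       \<chi> m = 3/2 * ((\<Sum>j\<in>{1..d}. t m j) - (\<Sum>i\<in>{1..d}. t i m)) + (s m * real a - real a / 2) + (u m - 1)"
proof -
  obtain t s u where bounds: "\<forall>i j. 0 \<le> t i j \<and> t i j \<le> 1" "\<forall>k. 0 \<le> s k \<and> s k \<le> 1"
    "\<forall>k. 0 \<le> u k \<and> u k \<le> 1"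
    and eq: "eqM d \<chi> (\<lambda>m.
          (\<Sum>i\<in>{1..d}. \<Sum>j\<in>{1..d}. t i j * (3/2 * (beta i m - beta j m)))
        + (\<Sum>k\<in>{1..d}. (- (real a / 2) * beta k m) + s k * (real a * beta k m))
        + (\<Sum>k\<in>{1..d}. (- beta k m) + u k * beta k m))"
    using assms unfolding V_a_1_def by blast
  have "\<chi> m = 3/2 * ((\<Sum>j\<in>{1..d}. t m j) - (\<Sum>i\<in>{1..d}. t i m)) + (s m * real a - real a / 2) + (u m - 1)"
    if "m \<in> {1..d}" for m
    using eq that V_a_1_combination_coord[OF that] by (simp add: eqM_def)
  with bounds that show ?thesis
    by blast
qed

lemma V_a_1_subset_sum_bounds:
  assumes V: "\<chi> \<in> V_a_1 a d" and S: "S \<subseteq> {1..d}"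
  defines "k \<equiv> real (card S)" and "l \<equiv> real (card ({1..d} - S))"
  shows "(\<Sum>m\<in>S. \<chi> m) \<le> 3/2 * k * l + k * (real a / 2)"
    and "- (3/2 * k * l) - k * (real a / 2 + 1) \<le> (\<Sum>m\<in>S. \<chi> m)"
proof -
  obtain t s u where t: "\<And>i j. 0 \<le> t i j \<and> t i j \<le> 1" and s: "\<And>k. 0 \<le> s k \<and> s k \<le> 1"
    and u: "\<And>k. 0 \<le> u k \<and> u k \<le> 1"
    and coord: "\<And>m. m \<in> {1..d} \<Longrightarrow>
      \<chi> m = 3/2 * ((\<Sum>j\<in>{1..d}. t m j) - (\<Sum>i\<in>{1..d}. t i m)) + (s m * real a - real a / 2) + (u m - 1)"
    using V_a_1_coords[OF V] by blast
  define out where "out = (\<Sum>m\<in>S. \<Sum>j\<in>{1..d} - S. t m j)"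
  define inn where "inn = (\<Sum>m\<in>S. \<Sum>i\<in>{1..d} - S. t i m)"
  define r where "r m = (s m * real a - real a / 2) + (u m - 1)" for m
  have "(\<Sum>m\<in>S. \<chi> m) = (\<Sum>m\<in>S. 3/2 * ((\<Sum>j\<in>{1..d}. t m j) - (\<Sum>i\<in>{1..d}. t i m)) + r m)"
    using S coord unfolding r_def by (intro sum.cong) auto
  also have "\<dots> = 3/2 * (\<Sum>m\<in>S. (\<Sum>j\<in>{1..d}. t m j) - (\<Sum>i\<in>{1..d}. t i m)) + (\<Sum>m\<in>S. r m)"
    by (simp add: sum.distrib sum_distrib_left)
  also have "\<dots> = 3/2 * (out - inn) + (\<Sum>m\<in>S. r m)"
    using net_flow_out_of_subset[OF _ S, of t] unfolding out_def inn_def by simp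
  finally have sum_eq: "(\<Sum>m\<in>S. \<chi> m) = 3/2 * (out - inn) + (\<Sum>m\<in>S. r m)" .
  have "out \<le> k * (l * 1)" and "inn \<le> k * (l * 1)"
    unfolding out_def inn_def k_def l_def
    by (intro sum_bounded_above; use t in \<open>auto intro: sum_bounded_above\<close>)+
  then have "out \<le> k * l" "inn \<le> k * l"
    by simp_all
  moreover have "0 \<le> out" "0 \<le> inn"
    unfolding out_def inn_def using t by (auto intro: sum_nonneg)
  moreover have "- (k * (real a / 2 + 1)) \<le> (\<Sum>m\<in>S. r m)" "(\<Sum>m\<in>S. r m) \<le> k * (real a / 2)"
  proof -
    have lo: "- (real a / 2 + 1) \<le> r m" and hi: "r m \<le> real a / 2" for m
      using s[of m] u[of m] mult_left_le_one_le[of "real a" "s m"] unfolding r_def by auto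
    have "k * (- (real a / 2 + 1)) \<le> (\<Sum>m\<in>S. r m)"
      unfolding k_def by (rule sum_bounded_below) (rule lo)
    then show "- (k * (real a / 2 + 1)) \<le> (\<Sum>m\<in>S. r m)"
      by (simp only: mult_minus_right)
    show "(\<Sum>m\<in>S. r m) \<le> k * (real a / 2)"
      unfolding k_def by (rule sum_bounded_above) (rule hi)
  qed
  ultimately show "(\<Sum>m\<in>S. \<chi> m) \<le> 3/2 * k * l + k * (real a / 2)"
    and "- (3/2 * k * l) - k * (real a / 2 + 1) \<le> (\<Sum>m\<in>S. \<chi> m)"
    unfolding sum_eq by (simp_all add: field_simps)
qed

lemma V_a_1_tail_sum_le:
  assumes "\<chi> \<in> V_a_1 a d" "v \<le> d"
  shows "(\<Sum>m\<in>{v<..d}. \<chi> m) \<le> 3/2 * (real d - real v) * real v + (real d - real v) * (real a / 2)"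
proof -
  have "{v<..d} \<subseteq> {1..d}" "{1..d} - {v<..d} = {1..v}"
    using assms by auto
  then show ?thesis
    using V_a_1_subset_sum_bounds(1)[OF assms(1), of "{v<..d}"] assms by (simp add: of_nat_diff)
qed

lemma V_a_1_head_sum_ge:
  assumes "\<chi> \<in> V_a_1 a d" "v \<le> d"
  shows "- (3/2 * real v * (real d - real v)) - real v * (real a / 2 + 1) \<le> (\<Sum>m\<in>{0<..v}. \<chi> m)"
proof -
  have "{0<..v} = {1..v}" "{1..v} \<subseteq> {1..d}" "{1..d} - {1..v} = {v<..d}"
    using assms by auto
  then show ?thesis
    using V_a_1_subset_sum_bounds(2)[OF assms(1), of "{1..v}"] assms by (simp add: of_nat_diff)
qed

section \<open>Monotone vectors in the root zonotope\<close>

text \<open>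
  On a plateau the tail sum is affine in the cut, while the bound is concave, so it suffices to
  check the bound at the two ends.
\<close>

lemma tail_bound_on_plateau:
  fixes z :: "nat \<Rightarrow> real"
  assumes "p \<le> v0" "v0 \<le> v" "v \<le> v1" "v1 \<le> q"
    and plateau: "\<And>j. j \<in> {v0<..v1} \<Longrightarrow> z j = \<theta>"
    and at_v0: "(\<Sum>j\<in>{v0<..q}. z j) \<le> 3/2 * (real q - real v0) * (real v0 - real p)"
    and at_v1: "(\<Sum>j\<in>{v1<..q}. z j) \<le> 3/2 * (real q - real v1) * (real v1 - real p)"
  shows "(\<Sum>j\<in>{v<..q}. z j) \<le> 3/2 * (real q - real v) * (real v - real p)"
proof -
  have "(\<Sum>j\<in>{v<..v1}. z j) = (real v1 - real v) * \<theta>" "(\<Sum>j\<in>{v0<..v}. z j) = (real v - real v0) * \<theta>"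
    using assms by (simp_all add: of_nat_diff)
  then have from_v1: "(\<Sum>j\<in>{v<..q}. z j) = (\<Sum>j\<in>{v1<..q}. z j) + (real v1 - real v) * \<theta>"
    and from_v0: "(\<Sum>j\<in>{v0<..q}. z j) = (\<Sum>j\<in>{v<..q}. z j) + (real v - real v0) * \<theta>"
    using assms sum_greaterThanAtMost_concat[of v v1 q z] sum_greaterThanAtMost_concat[of v0 v q z] by simp_all
  show ?thesis
  proof (cases "\<theta> \<le> 3/2 * (real v1 + real v - real q - real p)")
    case True
    then have "(real v1 - real v) * \<theta> \<le> (real v1 - real v) * (3/2 * (real v1 + real v - real q - real p))"
      using assms by (intro mult_left_mono) auto
    then show ?thesis
      using from_v1 at_v1 by (simp add: field_simps)
  next
    case False
    then have "(real v - real v0) * (3/2 * (real v + real v0 - real q - real p)) \<le> (real v - real v0) * \<theta>"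
      using assms by (intro mult_left_mono) auto
    then show ?thesis
      using from_v0 at_v0 by (simp add: field_simps)
  qed
qed

lemma tail_bound_across_plateau:
  fixes z :: "nat \<Rightarrow> real" and top bot :: "nat \<Rightarrow> bool"
  assumes top_up: "\<And>i j. p < i \<Longrightarrow> i \<le> j \<Longrightarrow> j \<le> q \<Longrightarrow> top i \<Longrightarrow> top j"
    and bot_down: "\<And>i j. p < i \<Longrightarrow> i \<le> j \<Longrightarrow> j \<le> q \<Longrightarrow> bot j \<Longrightarrow> bot i"
    and plateau: "\<And>j. p < j \<Longrightarrow> j \<le> q \<Longrightarrow> \<not> top j \<Longrightarrow> \<not> bot j \<Longrightarrow> z j = \<theta>"
    and top_bound: "\<And>w. p \<le> w \<Longrightarrow> w \<le> q \<Longrightarrow> (\<forall>j\<in>{w<..q}. top j) \<Longrightarrow>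
      (\<Sum>j\<in>{w<..q}. z j) \<le> 3/2 * (real q - real w) * (real w - real p)"
    and bot_bound: "\<And>w. p \<le> w \<Longrightarrow> w \<le> q \<Longrightarrow> (\<forall>j\<in>{p<..w}. bot j) \<Longrightarrow>
      (\<Sum>j\<in>{w<..q}. z j) \<le> 3/2 * (real q - real w) * (real w - real p)"
    and v: "p \<le> v" "v \<le> q"
  shows "(\<Sum>j\<in>{v<..q}. z j) \<le> 3/2 * (real q - real v) * (real v - real p)"
proof (cases "(\<forall>j\<in>{v<..q}. top j) \<or> (\<forall>j\<in>{p<..v}. bot j)")
  case True
  then show ?thesis
    using top_bound bot_bound v by blast
next
  case False
  define v1 where "v1 = Max {j\<in>{v<..q}. \<not> top j}"
  define w0 where "w0 = Min {j\<in>{p<..v}. \<not> bot j}"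
  have v1_in: "v1 \<in> {j\<in>{v<..q}. \<not> top j}"
    using False unfolding v1_def by (intro Max_in) auto
  have v1_max: "\<And>j. j \<in> {v<..q} \<Longrightarrow> \<not> top j \<Longrightarrow> j \<le> v1"
    unfolding v1_def by (intro Max_ge) auto
  from v1_in have v1: "v < v1" "v1 \<le> q" "\<not> top v1"
    by auto
  have w0_in: "w0 \<in> {j\<in>{p<..v}. \<not> bot j}"
    using False unfolding w0_def by (intro Min_in) auto
  have w0_min: "\<And>j. j \<in> {p<..v} \<Longrightarrow> \<not> bot j \<Longrightarrow> w0 \<le> j"
    unfolding w0_def by (intro Min_le) auto
  from w0_in have w0: "p < w0" "w0 \<le> v" "\<not> bot w0"
    by auto
  show ?thesis
  proof (rule tail_bound_on_plateau)
    show "p \<le> w0 - 1" "w0 - 1 \<le> v" "v \<le> v1" "v1 \<le> q"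
      using v1 w0 by auto
    show "z j = \<theta>" if j: "j \<in> {w0 - 1<..v1}" for j
    proof (rule plateau)
      have "w0 \<le> j" "j \<le> v1"
        using j w0 by auto
      then show "p < j" "j \<le> q" "\<not> top j" "\<not> bot j"
        using v1 w0 top_up[of j v1] bot_down[of w0 j] by auto
    qed
    show "(\<Sum>j\<in>{v1<..q}. z j) \<le> 3/2 * (real q - real v1) * (real v1 - real p)"
    proof (rule top_bound)
      show "\<forall>j\<in>{v1<..q}. top j"
      proof
        fix j
        assume "j \<in> {v1<..q}"
        with v1 have "j \<in> {v<..q}" "\<not> j \<le> v1"
          by auto
        with v1_max show "top j"
          by blast
      qed
    qed (use v1 v in auto)
    show "(\<Sum>j\<in>{w0 - 1<..q}. z j) \<le> 3/2 * (real q - real (w0 - 1)) * (real (w0 - 1) - real p)"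
    proof (rule bot_bound)
      show "\<forall>j\<in>{p<..w0 - 1}. bot j"
      proof
        fix j
        assume "j \<in> {p<..w0 - 1}"
        with w0 have "j \<in> {p<..v}" "\<not> w0 \<le> j"
          by auto
        with w0_min show "bot j"
          by blast
      qed
    qed (use w0 v in auto)
  qed
qed

lemma ex_clip_level:
  fixes y :: "'a \<Rightarrow> real"
  assumes "finite A" "L \<le> U" "real (card A) * L \<le> s" "s \<le> real (card A) * U"
  shows "\<exists>\<theta>. (\<Sum>m\<in>A. max L (min U (y m - \<theta>))) = s"
proof -
  define R where "R \<theta> = (\<Sum>m\<in>A. max L (min U (y m - \<theta>)))" for \<theta>
  define B where "B = (\<Sum>m\<in>A. \<bar>y m\<bar>)"
  have y_B: "\<bar>y m\<bar> \<le> B" if "m \<in> A" for m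
    unfolding B_def using that assms(1) by (intro member_le_sum) auto
  have "0 \<le> B"
    unfolding B_def by (simp add: sum_nonneg)
  have "max L (min U (y m - (- B - \<bar>U\<bar>))) = U" "max L (min U (y m - (B + \<bar>L\<bar>))) = L"
    if "m \<in> A" for m
    using y_B[OF that] abs_ge_self[of U] abs_ge_minus_self[of L] assms(2) by (auto simp: abs_le_iff max_def min_def)
  then have "R (- B - \<bar>U\<bar>) = (\<Sum>m\<in>A. U)" "R (B + \<bar>L\<bar>) = (\<Sum>m\<in>A. L)"
    unfolding R_def by (auto intro!: sum.cong)
  moreover have "- B - \<bar>U\<bar> \<le> B + \<bar>L\<bar>"
    using \<open>0 \<le> B\<close> by simp
  moreover have "continuous_on {- B - \<bar>U\<bar> .. B + \<bar>L\<bar>} R"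
    unfolding R_def by (intro continuous_intros)
  ultimately show ?thesis
    using IVT2'[of R "B + \<bar>L\<bar>" s "- B - \<bar>U\<bar>"] assms unfolding R_def by (auto simp: mult.commute)
qed

lemma tail_bound_after_clipped_column:
  fixes z :: "nat \<Rightarrow> real"
  assumes "p \<le> v" "v \<le> q"
    and mono: "\<And>i j. p < i \<Longrightarrow> i \<le> j \<Longrightarrow> j \<le> Suc q \<Longrightarrow> z i \<le> z j"
    and sum_zero: "(\<Sum>j\<in>{p<..Suc q}. z j) = 0"
    and tail: "\<And>w. p \<le> w \<Longrightarrow> w \<le> Suc q \<Longrightarrow>
      (\<Sum>j\<in>{w<..Suc q}. z j) \<le> 3/2 * (real (Suc q) - real w) * (real w - real p)"
    and column: "(\<Sum>j\<in>{p<..q}. max 0 (min (3/2) (\<theta> - z j))) = z (Suc q)"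
  shows "(\<Sum>j\<in>{v<..q}. z j + max 0 (min (3/2) (\<theta> - z j))) \<le> 3/2 * (real q - real v) * (real v - real p)"
proof (rule tail_bound_across_plateau[where top = "\<lambda>j. \<theta> \<le> z j" and bot = "\<lambda>j. 3/2 \<le> \<theta> - z j"])
  show "\<theta> \<le> z j" if "p < i" "i \<le> j" "j \<le> q" "\<theta> \<le> z i" for i j
    using that mono[of i j] by simp
  show "3/2 \<le> \<theta> - z i" if "p < i" "i \<le> j" "j \<le> q" "3/2 \<le> \<theta> - z j" for i j
    using that mono[of i j] by simp
  show "z j + max 0 (min (3/2) (\<theta> - z j)) = \<theta>" if "\<not> \<theta> \<le> z j" "\<not> 3/2 \<le> \<theta> - z j" for j
    using that by simp
next
  fix w
  assume w: "p \<le> w" "w \<le> q" and top: "\<forall>j\<in>{w<..q}. \<theta> \<le> z j"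
  have step: "3/2 * (real (Suc q) - real w) * (real w - real p) =
      3/2 * (real q - real w) * (real w - real p) + 3/2 * (real w - real p)"
    by (simp add: field_simps)
  have "max 0 (min (3/2) (\<theta> - z j)) = 0" if "j \<in> {w<..q}" for j
    using top[rule_format, OF that] by simp
  then have "(\<Sum>j\<in>{w<..q}. z j + max 0 (min (3/2) (\<theta> - z j))) = (\<Sum>j\<in>{w<..q}. z j)"
    by simp
  moreover have "(\<Sum>j\<in>{w<..q}. z j) \<le> (real q - real w) * z (Suc q)"
    using sum_mono[of "{w<..q}" z "\<lambda>_. z (Suc q)"] mono w by (simp add: of_nat_diff)
  moreover have "(\<Sum>j\<in>{w<..q}. z j) + z (Suc q) \<le> 3/2 * (real (Suc q) - real w) * (real w - real p)"
    using tail[of w] w by (simp add: sum_greaterThanAtMost_Suc)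
  moreover have "(real q - real w) * z (Suc q) \<le> (real q - real w) * (3/2 * (real w - real p))"
    if "z (Suc q) \<le> 3/2 * (real w - real p)"
    using that w by (intro mult_left_mono) auto
  moreover have "(real q - real w) * (3/2 * (real w - real p)) = 3/2 * (real q - real w) * (real w - real p)"
    by (simp add: field_simps)
  ultimately show "(\<Sum>j\<in>{w<..q}. z j + max 0 (min (3/2) (\<theta> - z j))) \<le> 3/2 * (real q - real w) * (real w - real p)"
    using step by (cases "z (Suc q) \<le> 3/2 * (real w - real p)") linarith+
next
  fix w
  assume w: "p \<le> w" "w \<le> q" and bot: "\<forall>j\<in>{p<..w}. 3/2 \<le> \<theta> - z j"
  let ?z' = "\<lambda>j. z j + max 0 (min (3/2) (\<theta> - z j))"
  have step: "3/2 * (real (Suc q) - real w) * (real w - real p) =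
      3/2 * (real q - real w) * (real w - real p) + 3/2 * (real w - real p)"
    by (simp add: field_simps)
  have "?z' j = z j + 3/2" if "j \<in> {p<..w}" for j
    using bot[rule_format, OF that] by simp
  then have "(\<Sum>j\<in>{p<..w}. ?z' j) = (\<Sum>j\<in>{p<..w}. z j + 3/2)"
    by (rule sum.cong[OF refl])
  also have "\<dots> = (\<Sum>j\<in>{p<..w}. z j) + 3/2 * (real w - real p)"
    using w by (simp add: sum.distrib of_nat_diff)
  moreover have "(\<Sum>j\<in>{p<..q}. ?z' j) = (\<Sum>j\<in>{p<..Suc q}. z j)"
    using column w by (simp add: sum.distrib sum_greaterThanAtMost_Suc)
  moreover have "(\<Sum>j\<in>{p<..q}. ?z' j) = (\<Sum>j\<in>{p<..w}. ?z' j) + (\<Sum>j\<in>{w<..q}. ?z' j)"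
    "(\<Sum>j\<in>{p<..Suc q}. z j) = (\<Sum>j\<in>{p<..w}. z j) + (\<Sum>j\<in>{w<..Suc q}. z j)"
    using w by (intro sum_greaterThanAtMost_concat; simp)+
  ultimately show "(\<Sum>j\<in>{w<..q}. ?z' j) \<le> 3/2 * (real q - real w) * (real w - real p)"
    using sum_zero tail[of w] w step by linarith
qed (use assms in auto)

lemma root_zonotope_top_row:
  fixes z :: "nat \<Rightarrow> real"
  assumes pq: "p \<le> q"
    and mono: "\<And>i j. p < i \<Longrightarrow> i \<le> j \<Longrightarrow> j \<le> Suc q \<Longrightarrow> z i \<le> z j"
    and sum_zero: "(\<Sum>j\<in>{p<..Suc q}. z j) = 0"
    and tail: "\<And>w. p \<le> w \<Longrightarrow> w \<le> Suc q \<Longrightarrow>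
      (\<Sum>j\<in>{w<..Suc q}. z j) \<le> 3/2 * (real (Suc q) - real w) * (real w - real p)"
  obtains col where "\<And>j. 0 \<le> col j \<and> col j \<le> 3/2" "(\<Sum>j\<in>{p<..q}. col j) = z (Suc q)"
    "\<And>i j. p < i \<Longrightarrow> i \<le> j \<Longrightarrow> j \<le> q \<Longrightarrow> z i + col i \<le> z j + col j"
    "(\<Sum>j\<in>{p<..q}. z j + col j) = 0"
    "\<And>v. p \<le> v \<Longrightarrow> v \<le> q \<Longrightarrow> (\<Sum>j\<in>{v<..q}. z j + col j) \<le> 3/2 * (real q - real v) * (real v - real p)"
proof -
  have "0 \<le> (real (Suc q) - real p) * z (Suc q)"
    using sum_zero sum_mono[of "{p<..Suc q}" z "\<lambda>_. z (Suc q)"] mono pq by (simp add: of_nat_diff)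
  then have "0 \<le> z (Suc q)"
    using pq by (simp add: zero_le_mult_iff)
  moreover have "z (Suc q) \<le> real (card {p<..q}) * (3/2)"
    using tail[of q] pq by (simp add: sum_greaterThanAtMost_Suc algebra_simps)
  \<comment> \<open>The row clips \<open>- z j\<close> into \<open>[0, 3/2]\<close> at the level where it sums to \<open>z (Suc q)\<close>.\<close>
  ultimately obtain \<theta> where "(\<Sum>j\<in>{p<..q}. max 0 (min (3/2) (- z j - \<theta>))) = z (Suc q)"
    using ex_clip_level[of "{p<..q}" 0 "3/2" "z (Suc q)" "\<lambda>j. - z j"] by auto
  moreover have "\<And>j. - z j - \<theta> = - \<theta> - z j"
    by simp
  ultimately have column: "(\<Sum>j\<in>{p<..q}. max 0 (min (3/2) (- \<theta> - z j))) = z (Suc q)"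
    by simp
  show ?thesis
  proof (rule that)
    show "0 \<le> max 0 (min (3/2) (- \<theta> - z j)) \<and> max 0 (min (3/2) (- \<theta> - z j)) \<le> 3/2" for j
      by (simp add: max_def min_def)
    show "z i + max 0 (min (3/2) (- \<theta> - z i)) \<le> z j + max 0 (min (3/2) (- \<theta> - z j))"
      if "p < i" "i \<le> j" "j \<le> q" for i j
      using that mono[of i j] by (auto simp: max_def min_def)
    show "(\<Sum>j\<in>{p<..q}. z j + max 0 (min (3/2) (- \<theta> - z j))) = 0"
      using sum_zero column pq by (simp add: sum.distrib sum_greaterThanAtMost_Suc)
    show "(\<Sum>j\<in>{v<..q}. z j + max 0 (min (3/2) (- \<theta> - z j))) \<le> 3/2 * (real q - real v) * (real v - real p)"
      if "p \<le> v" "v \<le> q" for v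
      using that mono sum_zero tail column by (rule tail_bound_after_clipped_column)
  qed (fact column)
qed

lemma monotone_in_root_zonotope:
  fixes z :: "nat \<Rightarrow> real"
  assumes "p \<le> q"
    and "\<And>i j. p < i \<Longrightarrow> i \<le> j \<Longrightarrow> j \<le> q \<Longrightarrow> z i \<le> z j"
    and "(\<Sum>j\<in>{p<..q}. z j) = 0"
    and "\<And>v. p \<le> v \<Longrightarrow> v \<le> q \<Longrightarrow> (\<Sum>j\<in>{v<..q}. z j) \<le> 3/2 * (real q - real v) * (real v - real p)"
  shows "\<exists>c. (\<forall>i j. 0 \<le> c i j \<and> c i j \<le> 3/2) \<and> (\<forall>m\<in>{p<..q}. z m = root_sum p q c m)"
  using assms
proof (induction q arbitrary: z)
  case 0
  then show ?case
    by (intro exI[of _ "\<lambda>_ _. 0"]) auto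
next
  case (Suc q)
  show ?case
  proof (cases "p = Suc q")
    case True
    then show ?thesis
      by (intro exI[of _ "\<lambda>_ _. 0"]) auto
  next
    case False
    with Suc.prems(1) have pq: "p \<le> q"
      by simp
    obtain col where col: "\<And>j. 0 \<le> col j \<and> col j \<le> 3/2" and column: "(\<Sum>j\<in>{p<..q}. col j) = z (Suc q)"
      and mono': "\<And>i j. p < i \<Longrightarrow> i \<le> j \<Longrightarrow> j \<le> q \<Longrightarrow> z i + col i \<le> z j + col j"
      and sum_zero': "(\<Sum>j\<in>{p<..q}. z j + col j) = 0"
      and tail': "\<And>v. p \<le> v \<Longrightarrow> v \<le> q \<Longrightarrow>
        (\<Sum>j\<in>{v<..q}. z j + col j) \<le> 3/2 * (real q - real v) * (real v - real p)"
      using root_zonotope_top_row[OF pq Suc.prems(2-4)] by blast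
    obtain c where c: "\<forall>i j. 0 \<le> c i j \<and> c i j \<le> 3/2"
      and c_root: "\<forall>m\<in>{p<..q}. z m + col m = root_sum p q c m"
      using Suc.IH[OF pq mono' sum_zero' tail'] by blast
    show ?thesis
    proof (intro exI[of _ "c(Suc q := col)"] conjI allI ballI)
      show "0 \<le> (c(Suc q := col)) i j" "(c(Suc q := col)) i j \<le> 3/2" for i j
        using c col by auto
      show "z m = root_sum p (Suc q) (c(Suc q := col)) m" if "m \<in> {p<..Suc q}" for m
      proof (cases "m = Suc q")
        case True
        then show ?thesis
          using column unfolding root_sum_update_top_row[OF pq that] by simp
      next
        case False
        with that c_root have "z m + col m = root_sum p q c m"
          by auto
        with False show ?thesis
          unfolding root_sum_update_top_row[OF pq that] by simp
      qed
    qed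
  qed
qed

lemma tail_bound_after_box_clip:
  fixes y :: "nat \<Rightarrow> real"
  assumes "p \<le> v" "v \<le> q" "L \<le> U"
    and mono: "\<And>i j. p < i \<Longrightarrow> i \<le> j \<Longrightarrow> j \<le> q \<Longrightarrow> y i \<le> y j"
    and top: "\<And>w. p \<le> w \<Longrightarrow> w \<le> q \<Longrightarrow>
      (\<Sum>j\<in>{w<..q}. y j) \<le> 3/2 * (real q - real w) * (real w - real p) + (real q - real w) * U"
    and bot: "\<And>w. p \<le> w \<Longrightarrow> w \<le> q \<Longrightarrow>
      - (3/2 * (real w - real p) * (real q - real w)) + (real w - real p) * L \<le> (\<Sum>j\<in>{p<..w}. y j)"
    and level: "(\<Sum>j\<in>{p<..q}. max L (min U (y j - \<theta>))) = (\<Sum>j\<in>{p<..q}. y j)"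
  shows "(\<Sum>j\<in>{v<..q}. y j - max L (min U (y j - \<theta>))) \<le> 3/2 * (real q - real v) * (real v - real p)"
proof (rule tail_bound_across_plateau[where top = "\<lambda>j. U \<le> y j - \<theta>" and bot = "\<lambda>j. y j - \<theta> \<le> L"])
  show "U \<le> y j - \<theta>" if "p < i" "i \<le> j" "j \<le> q" "U \<le> y i - \<theta>" for i j
    using that mono[of i j] by simp
  show "y i - \<theta> \<le> L" if "p < i" "i \<le> j" "j \<le> q" "y j - \<theta> \<le> L" for i j
    using that mono[of i j] by simp
  show "y j - max L (min U (y j - \<theta>)) = \<theta>" if "\<not> U \<le> y j - \<theta>" "\<not> y j - \<theta> \<le> L" for j
    using that by simp
next
  fix w
  assume w: "p \<le> w" "w \<le> q" and up: "\<forall>j\<in>{w<..q}. U \<le> y j - \<theta>"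
  have "max L (min U (y j - \<theta>)) = U" if "j \<in> {w<..q}" for j
    using up[rule_format, OF that] \<open>L \<le> U\<close> by simp
  then have "(\<Sum>j\<in>{w<..q}. y j - max L (min U (y j - \<theta>))) = (\<Sum>j\<in>{w<..q}. y j) - (real q - real w) * U"
    using w by (simp add: sum_subtractf of_nat_diff)
  then show "(\<Sum>j\<in>{w<..q}. y j - max L (min U (y j - \<theta>))) \<le> 3/2 * (real q - real w) * (real w - real p)"
    using top[OF w] by linarith
next
  fix w
  assume w: "p \<le> w" "w \<le> q" and down: "\<forall>j\<in>{p<..w}. y j - \<theta> \<le> L"
  let ?z = "\<lambda>j. y j - max L (min U (y j - \<theta>))"
  have "max L (min U (y j - \<theta>)) = L" if "j \<in> {p<..w}" for j
    using down[rule_format, OF that] \<open>L \<le> U\<close> by simp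
  then have "(\<Sum>j\<in>{p<..w}. ?z j) = (\<Sum>j\<in>{p<..w}. y j) - (real w - real p) * L"
    using w by (simp add: sum_subtractf of_nat_diff)
  moreover have "(\<Sum>j\<in>{p<..q}. ?z j) = 0"
    using level by (simp add: sum_subtractf)
  moreover have "(\<Sum>j\<in>{p<..q}. ?z j) = (\<Sum>j\<in>{p<..w}. ?z j) + (\<Sum>j\<in>{w<..q}. ?z j)"
    using w by (rule sum_greaterThanAtMost_concat)
  ultimately have "(\<Sum>j\<in>{w<..q}. ?z j) = (real w - real p) * L - (\<Sum>j\<in>{p<..w}. y j)"
    by linarith
  moreover have "3/2 * (real w - real p) * (real q - real w) = 3/2 * (real q - real w) * (real w - real p)"
    by (simp add: field_simps)
  ultimately show "(\<Sum>j\<in>{w<..q}. ?z j) \<le> 3/2 * (real q - real w) * (real w - real p)"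
    using bot[OF w] by linarith
qed (use assms in auto)

lemma monotone_root_zonotope_plus_box:
  fixes y :: "nat \<Rightarrow> real"
  assumes pq: "p \<le> q"
    and mono: "\<And>i j. p < i \<Longrightarrow> i \<le> j \<Longrightarrow> j \<le> q \<Longrightarrow> y i \<le> y j"
    and top: "\<And>w. p \<le> w \<Longrightarrow> w \<le> q \<Longrightarrow>
      (\<Sum>j\<in>{w<..q}. y j) \<le> 3/2 * (real q - real w) * (real w - real p) + (real q - real w) * U"
    and bot: "\<And>w. p \<le> w \<Longrightarrow> w \<le> q \<Longrightarrow>
      - (3/2 * (real w - real p) * (real q - real w)) + (real w - real p) * L \<le> (\<Sum>j\<in>{p<..w}. y j)"
  shows "\<exists>c r. (\<forall>i j. 0 \<le> c i j \<and> c i j \<le> 3/2) \<and>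
    (\<forall>m\<in>{p<..q}. L \<le> r m \<and> r m \<le> U \<and> y m = root_sum p q c m + r m)"
proof (cases "p = q")
  case True
  then show ?thesis
    by (intro exI[of _ "\<lambda>_ _. 0"] exI[of _ "\<lambda>_. L"]) auto
next
  case False
  with pq have "0 < real q - real p"
    by simp
  moreover have total: "(real q - real p) * L \<le> (\<Sum>j\<in>{p<..q}. y j)" "(\<Sum>j\<in>{p<..q}. y j) \<le> (real q - real p) * U"
    using top[of p] bot[of q] pq by simp_all
  ultimately have "L \<le> U"
    by (metis mult_le_cancel_left_pos order.trans)
  with total pq obtain \<theta> where level: "(\<Sum>j\<in>{p<..q}. max L (min U (y j - \<theta>))) = (\<Sum>j\<in>{p<..q}. y j)"
    using ex_clip_level[of "{p<..q}" L U "\<Sum>j\<in>{p<..q}. y j" y] by (auto simp: of_nat_diff)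
  define r where "r j = max L (min U (y j - \<theta>))" for j
  have "\<exists>c. (\<forall>i j. 0 \<le> c i j \<and> c i j \<le> 3/2) \<and> (\<forall>m\<in>{p<..q}. y m - r m = root_sum p q c m)"
  proof (rule monotone_in_root_zonotope[OF pq])
    show "y i - r i \<le> y j - r j" if "p < i" "i \<le> j" "j \<le> q" for i j
      using that mono[of i j] unfolding r_def by (auto simp: max_def min_def)
    show "(\<Sum>j\<in>{p<..q}. y j - r j) = 0"
      using level unfolding r_def by (simp add: sum_subtractf)
    show "(\<Sum>j\<in>{v<..q}. y j - r j) \<le> 3/2 * (real q - real v) * (real v - real p)"
      if "p \<le> v" "v \<le> q" for v
      unfolding r_def using that \<open>L \<le> U\<close> mono top bot level by (rule tail_bound_after_box_clip)
  qed
  moreover have "L \<le> r m \<and> r m \<le> U" for m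
    unfolding r_def using \<open>L \<le> U\<close> by auto
  ultimately show ?thesis
    by (metis diff_add_cancel)
qed

lemma monotone_root_zonotope_plus_box_strict:
  fixes y :: "nat \<Rightarrow> real"
  assumes pq: "p \<le> q"
    and mono: "\<And>i j. p < i \<Longrightarrow> i \<le> j \<Longrightarrow> j \<le> q \<Longrightarrow> y i \<le> y j"
    and top: "\<And>w. p \<le> w \<Longrightarrow> w \<le> q \<Longrightarrow>
      (\<Sum>j\<in>{w<..q}. y j) \<le> 3/2 * (real q - real w) * (real w - real p) + (real q - real w) * U"
    and bot: "\<And>w. p < w \<Longrightarrow> w \<le> q \<Longrightarrow>
      - (3/2 * (real w - real p) * (real q - real w)) + (real w - real p) * L < (\<Sum>j\<in>{p<..w}. y j)"
  shows "\<exists>c r. (\<forall>i j. 0 \<le> c i j \<and> c i j \<le> 3/2) \<and>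
    (\<forall>m\<in>{p<..q}. L < r m \<and> r m \<le> U \<and> y m = root_sum p q c m + r m)"
proof (cases "p = q")
  case True
  then show ?thesis
    by (intro exI[of _ "\<lambda>_ _. 0"] exI[of _ "\<lambda>_. U"]) auto
next
  case False
  \<comment> \<open>The strict lower bounds hold with a uniform slack, which is absorbed into \<open>L\<close>.\<close>
  define slack where "slack w =
    ((\<Sum>j\<in>{p<..w}. y j) - (- (3/2 * (real w - real p) * (real q - real w)) + (real w - real p) * L))
      / (real w - real p)" for w
  define \<epsilon> where "\<epsilon> = Min (slack ` {p<..q})"
  have "0 < \<epsilon>"
    unfolding \<epsilon>_def slack_def using False pq bot by (subst Min_gr_iff) (auto intro!: divide_pos_pos)
  have bot': "- (3/2 * (real w - real p) * (real q - real w)) + (real w - real p) * (L + \<epsilon>) \<le> (\<Sum>j\<in>{p<..w}. y j)"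
    if "p \<le> w" "w \<le> q" for w
  proof (cases "w = p")
    case False
    with that have "\<epsilon> \<le> slack w" "0 < real w - real p"
      unfolding \<epsilon>_def by auto
    then show ?thesis
      unfolding slack_def by (simp add: pos_le_divide_eq algebra_simps)
  qed simp
  obtain c r where "\<forall>i j. 0 \<le> c i j \<and> c i j \<le> 3/2"
    and "\<forall>m\<in>{p<..q}. L + \<epsilon> \<le> r m \<and> r m \<le> U \<and> y m = root_sum p q c m + r m"
    using monotone_root_zonotope_plus_box[OF pq mono top bot'] by blast
  with \<open>0 < \<epsilon>\<close> show ?thesis
    by (intro exI[of _ c] exI[of _ r]) force
qed

section \<open>The cut\<close>

text \<open>
  \<open>corner_sum a d w\<close> is the function \<open>\<psi>\<close> above and \<open>excess\<close> is \<open>\<Phi>\<close>: for the decomposition with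
  cut \<open>w\<close> and \<open>c\<^sub>i = -a/2\<close> below the cut, the root terms inside the lower block telescope away in
  \<open>\<chi>\<^sub>1 + ... + \<chi>\<^sub>w\<close>, and each of the \<open>w\<close> lower coordinates loses \<open>3/2\<close> for each of the \<open>d - w\<close>
  upper ones.
\<close>

definition corner_sum :: "nat \<Rightarrow> nat \<Rightarrow> nat \<Rightarrow> real" where
  "corner_sum a d w = real w * (3/2 * real w - 3/2 * real d - real a / 2)"

definition excess :: "nat \<Rightarrow> nat \<Rightarrow> (nat \<Rightarrow> real) \<Rightarrow> nat \<Rightarrow> real" where
  "excess a d \<chi> w = (\<Sum>m\<in>{0<..w}. \<chi> m) - corner_sum a d w"

lemma corner_sum_diff:
  "corner_sum a d w - corner_sum a d v = (real w - real v) * (3/2 * (real w + real v) - 3/2 * real d - real a / 2)"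
  unfolding corner_sum_def by (simp add: field_simps)

lemma sum_eq_excess_diff:
  "v \<le> w \<Longrightarrow> (\<Sum>m\<in>{v<..w}. \<chi> m) = excess a d \<chi> w - excess a d \<chi> v + (corner_sum a d w - corner_sum a d v)"
  unfolding excess_def using sum_greaterThanAtMost_concat[of 0 v w \<chi>] by simp

lemma split_decomp_excess_le:
  assumes "split_decomp a d \<chi> e" "e \<le> d" "v < e"
  shows "excess a d \<chi> e \<le> excess a d \<chi> v"
proof -
  obtain c ci where c: "\<forall>i j. 1 \<le> j \<longrightarrow> j < i \<longrightarrow> i \<le> d \<longrightarrow> 0 \<le> c i j \<and> c i j \<le> 3/2"
    and ci: "\<forall>i\<in>{1..e}. ci i \<le> - real a / 2"
    and coord: "\<forall>m\<in>{1..d}. \<chi> m = (if m \<le> e then root_sum 0 e c m - 3/2 * (real d - real e)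
                               else root_sum e d c m + 3/2 * real e) + ci m"
    using assms(1) unfolding split_decomp_iff_coords[OF assms(2)] by blast
  define K where "K = 3/2 * (real d - real e)"
  have "\<chi> m = (\<Sum>j\<in>{0<..v}. c m j) + ((\<Sum>j\<in>{v<..<m}. c m j) - (\<Sum>i\<in>{m<..e}. c i m)) - K + ci m"
    if m: "m \<in> {v<..e}" for m
  proof -
    have "{0<..<m} = {0<..v} \<union> {v<..<m}"
      using m by auto
    then have "(\<Sum>j\<in>{0<..<m}. c m j) = (\<Sum>j\<in>{0<..v}. c m j) + (\<Sum>j\<in>{v<..<m}. c m j)"
      by (simp add: sum.union_disjoint[symmetric] ivl_disj_int)
    then show ?thesis
      using coord m assms(2,3) unfolding K_def root_sum_def by auto
  qed
  then have "(\<Sum>m\<in>{v<..e}. \<chi> m) = (\<Sum>m\<in>{v<..e}. \<Sum>j\<in>{0<..v}. c m j)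
      + ((\<Sum>m\<in>{v<..e}. \<Sum>j\<in>{v<..<m}. c m j) - (\<Sum>m\<in>{v<..e}. \<Sum>i\<in>{m<..e}. c i m))
      - (\<Sum>m\<in>{v<..e}. K) + (\<Sum>m\<in>{v<..e}. ci m)"
    by (simp add: sum.distrib sum_subtractf)
  also have "(\<Sum>m\<in>{v<..e}. \<Sum>j\<in>{v<..<m}. c m j) = (\<Sum>m\<in>{v<..e}. \<Sum>i\<in>{m<..e}. c i m)"
    by (rule sum_triangle_swap)
  finally have sum_eq: "(\<Sum>m\<in>{v<..e}. \<chi> m) =
      (\<Sum>m\<in>{v<..e}. \<Sum>j\<in>{0<..v}. c m j) - (real e - real v) * K + (\<Sum>m\<in>{v<..e}. ci m)"
    using assms(3) by (simp add: sum_const_greaterThanAtMost)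
  have "(\<Sum>m\<in>{v<..e}. \<Sum>j\<in>{0<..v}. c m j) \<le> of_nat (card {v<..e}) * (of_nat (card {0<..v}) * (3/2))"
    using c assms(2) by (intro sum_bounded_above) auto
  moreover have "(\<Sum>m\<in>{v<..e}. ci m) \<le> of_nat (card {v<..e}) * (- real a / 2)"
    using ci assms(3) by (intro sum_bounded_above) auto
  moreover have "(real e - real v) * (real v * (3/2)) - (real e - real v) * K + (real e - real v) * (- real a / 2)
      = corner_sum a d e - corner_sum a d v"
    unfolding corner_sum_diff K_def by (simp add: field_simps)
  ultimately have "(\<Sum>m\<in>{v<..e}. \<chi> m) \<le> corner_sum a d e - corner_sum a d v"
    using sum_eq assms(3) by (simp add: of_nat_diff)
  then show ?thesis
    using sum_eq_excess_diff[of v e \<chi> a d] assms(3) by simp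
qed

lemma split_decomp_excess_less:
  assumes "split_decomp a d \<chi> e" "e \<le> d" "e < v" "v \<le> d"
  shows "excess a d \<chi> e < excess a d \<chi> v"
proof -
  obtain c ci where c: "\<forall>i j. 1 \<le> j \<longrightarrow> j < i \<longrightarrow> i \<le> d \<longrightarrow> 0 \<le> c i j \<and> c i j \<le> 3/2"
    and ci: "\<forall>i\<in>{e<..d}. - real a / 2 < ci i"
    and coord: "\<forall>m\<in>{1..d}. \<chi> m = (if m \<le> e then root_sum 0 e c m - 3/2 * (real d - real e)
                               else root_sum e d c m + 3/2 * real e) + ci m"
    using assms(1) unfolding split_decomp_iff_coords[OF assms(2)] by blast
  define K where "K = 3/2 * real e"
  have "\<chi> m = ((\<Sum>j\<in>{e<..<m}. c m j) - (\<Sum>i\<in>{m<..v}. c i m)) - (\<Sum>i\<in>{v<..d}. c i m) + K + ci m"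
    if m: "m \<in> {e<..v}" for m
  proof -
    have "(\<Sum>i\<in>{m<..d}. c i m) = (\<Sum>i\<in>{m<..v}. c i m) + (\<Sum>i\<in>{v<..d}. c i m)"
      using m assms(4) by (intro sum_greaterThanAtMost_concat) auto
    then show ?thesis
      using coord m assms(4) unfolding K_def root_sum_def by auto
  qed
  then have "(\<Sum>m\<in>{e<..v}. \<chi> m) = ((\<Sum>m\<in>{e<..v}. \<Sum>j\<in>{e<..<m}. c m j) - (\<Sum>m\<in>{e<..v}. \<Sum>i\<in>{m<..v}. c i m))
      - (\<Sum>m\<in>{e<..v}. \<Sum>i\<in>{v<..d}. c i m) + (\<Sum>m\<in>{e<..v}. K) + (\<Sum>m\<in>{e<..v}. ci m)"
    by (simp add: sum.distrib sum_subtractf)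
  also have "(\<Sum>m\<in>{e<..v}. \<Sum>j\<in>{e<..<m}. c m j) = (\<Sum>m\<in>{e<..v}. \<Sum>i\<in>{m<..v}. c i m)"
    by (rule sum_triangle_swap)
  finally have sum_eq: "(\<Sum>m\<in>{e<..v}. \<chi> m) =
      - (\<Sum>m\<in>{e<..v}. \<Sum>i\<in>{v<..d}. c i m) + (real v - real e) * K + (\<Sum>m\<in>{e<..v}. ci m)"
    using assms(3) by (simp add: sum_const_greaterThanAtMost)
  have "(\<Sum>m\<in>{e<..v}. \<Sum>i\<in>{v<..d}. c i m) \<le> of_nat (card {e<..v}) * (of_nat (card {v<..d}) * (3/2))"
    using c assms(3) by (intro sum_bounded_above) auto
  moreover have "(\<Sum>m\<in>{e<..v}. - real a / 2) < (\<Sum>m\<in>{e<..v}. ci m)"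
    using ci assms(3,4) by (intro sum_strict_mono) auto
  moreover have "- ((real v - real e) * ((real d - real v) * (3/2))) + (real v - real e) * K
      + (real v - real e) * (- real a / 2) = corner_sum a d v - corner_sum a d e"
    unfolding corner_sum_diff K_def by (simp add: field_simps)
  ultimately have "corner_sum a d v - corner_sum a d e < (\<Sum>m\<in>{e<..v}. \<chi> m)"
    using sum_eq assms(3,4) by (simp add: of_nat_diff sum_const_greaterThanAtMost)
  then show ?thesis
    using sum_eq_excess_diff[of e v \<chi> a d] assms(3) by simp
qed

lemma split_decomp_unique:
  assumes "split_decomp a d \<chi> e1" "split_decomp a d \<chi> e2" "e1 \<le> d" "e2 \<le> d"
  shows "e1 = e2"
proof (rule linorder_cases[of e1 e2])
  assume "e1 < e2"
  then show ?thesis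
    using split_decomp_excess_less[OF assms(1,3)] split_decomp_excess_le[OF assms(2,4)] assms by force
next
  assume "e2 < e1"
  then show ?thesis
    using split_decomp_excess_less[OF assms(2,4)] split_decomp_excess_le[OF assms(1,3)] assms by force
qed

lemma lower_block_decomp:
  assumes V: "\<chi> \<in> V_a_1 a d" and mono: "mono_on {1..d} \<chi>"
    and "e \<le> d" and min: "\<And>v. v \<le> e \<Longrightarrow> excess a d \<chi> e \<le> excess a d \<chi> v"
  shows "\<exists>c r. (\<forall>i j. 0 \<le> c i j \<and> c i j \<le> 3/2) \<and>
    (\<forall>m\<in>{0<..e}. - (real a + 2) / 2 \<le> r m \<and> r m \<le> - real a / 2 \<and>
      \<chi> m + 3/2 * (real d - real e) = root_sum 0 e c m + r m)"
proof (rule monotone_root_zonotope_plus_box)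
  show "\<chi> i + 3/2 * (real d - real e) \<le> \<chi> j + 3/2 * (real d - real e)" if "0 < i" "i \<le> j" "j \<le> e" for i j
    using that \<open>e \<le> d\<close> by (simp add: mono_onD[OF mono])
next
  fix w
  assume w: "0 \<le> w" "w \<le> e"
  have "(\<Sum>j\<in>{w<..e}. \<chi> j + 3/2 * (real d - real e)) =
      (\<Sum>j\<in>{w<..e}. \<chi> j) + (real e - real w) * (3/2 * (real d - real e))"
    using w by (simp add: sum.distrib of_nat_diff)
  moreover have "(\<Sum>j\<in>{w<..e}. \<chi> j) \<le> corner_sum a d e - corner_sum a d w"
    using sum_eq_excess_diff[of w e \<chi> a d] min[of w] w by simp
  moreover have "corner_sum a d e - corner_sum a d w + (real e - real w) * (3/2 * (real d - real e)) =
      3/2 * (real e - real w) * (real w - real 0) + (real e - real w) * (- real a / 2)"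
    unfolding corner_sum_diff by (simp add: field_simps)
  ultimately show "(\<Sum>j\<in>{w<..e}. \<chi> j + 3/2 * (real d - real e))
      \<le> 3/2 * (real e - real w) * (real w - real 0) + (real e - real w) * (- real a / 2)"
    by linarith
next
  fix w
  assume w: "0 \<le> w" "w \<le> e"
  have "(\<Sum>j\<in>{0<..w}. \<chi> j + 3/2 * (real d - real e)) = (\<Sum>j\<in>{0<..w}. \<chi> j) + real w * (3/2 * (real d - real e))"
    by (simp add: sum.distrib)
  moreover have "- (3/2 * real w * (real d - real w)) - real w * (real a / 2 + 1) \<le> (\<Sum>j\<in>{0<..w}. \<chi> j)"
    using V_a_1_head_sum_ge[OF V, of w] w \<open>e \<le> d\<close> by simp
  moreover have "- (3/2 * real w * (real d - real w)) - real w * (real a / 2 + 1) + real w * (3/2 * (real d - real e)) =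
      - (3/2 * (real w - real 0) * (real e - real w)) + (real w - real 0) * (- (real a + 2) / 2)"
    by (simp add: field_simps)
  ultimately show "- (3/2 * (real w - real 0) * (real e - real w)) + (real w - real 0) * (- (real a + 2) / 2)
      \<le> (\<Sum>j\<in>{0<..w}. \<chi> j + 3/2 * (real d - real e))"
    by linarith
qed simp

lemma upper_block_decomp:
  assumes V: "\<chi> \<in> V_a_1 a d" and mono: "mono_on {1..d} \<chi>"
    and "e \<le> d" and last: "\<And>v. e < v \<Longrightarrow> v \<le> d \<Longrightarrow> excess a d \<chi> e < excess a d \<chi> v"
  shows "\<exists>c r. (\<forall>i j. 0 \<le> c i j \<and> c i j \<le> 3/2) \<and>
    (\<forall>m\<in>{e<..d}. - real a / 2 < r m \<and> r m \<le> real a / 2 \<and>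
      \<chi> m - 3/2 * real e = root_sum e d c m + r m)"
proof (rule monotone_root_zonotope_plus_box_strict)
  show "\<chi> i - 3/2 * real e \<le> \<chi> j - 3/2 * real e" if "e < i" "i \<le> j" "j \<le> d" for i j
    using that by (simp add: mono_onD[OF mono])
next
  fix w
  assume w: "e \<le> w" "w \<le> d"
  have "(\<Sum>j\<in>{w<..d}. \<chi> j - 3/2 * real e) = (\<Sum>j\<in>{w<..d}. \<chi> j) - (real d - real w) * (3/2 * real e)"
    using w by (simp add: sum_subtractf of_nat_diff)
  moreover have "(\<Sum>j\<in>{w<..d}. \<chi> j) \<le> 3/2 * (real d - real w) * real w + (real d - real w) * (real a / 2)"
    using V_a_1_tail_sum_le[OF V, of w] w by simp
  moreover have "3/2 * (real d - real w) * real w + (real d - real w) * (real a / 2) - (real d - real w) * (3/2 * real e) =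
      3/2 * (real d - real w) * (real w - real e) + (real d - real w) * (real a / 2)"
    by (simp add: field_simps)
  ultimately show "(\<Sum>j\<in>{w<..d}. \<chi> j - 3/2 * real e)
      \<le> 3/2 * (real d - real w) * (real w - real e) + (real d - real w) * (real a / 2)"
    by linarith
next
  fix w
  assume w: "e < w" "w \<le> d"
  have "(\<Sum>j\<in>{e<..w}. \<chi> j - 3/2 * real e) = (\<Sum>j\<in>{e<..w}. \<chi> j) - (real w - real e) * (3/2 * real e)"
    using w by (simp add: sum_subtractf of_nat_diff)
  moreover have "corner_sum a d w - corner_sum a d e < (\<Sum>j\<in>{e<..w}. \<chi> j)"
    using sum_eq_excess_diff[of e w \<chi> a d] last[OF w] w by simp
  moreover have "corner_sum a d w - corner_sum a d e - (real w - real e) * (3/2 * real e) =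
      - (3/2 * (real w - real e) * (real d - real w)) + (real w - real e) * (- real a / 2)"
    unfolding corner_sum_diff by (simp add: field_simps)
  ultimately show "- (3/2 * (real w - real e) * (real d - real w)) + (real w - real e) * (- real a / 2)
      < (\<Sum>j\<in>{e<..w}. \<chi> j - 3/2 * real e)"
    by linarith
qed fact

lemma split_decomp_at_last_argmin:
  assumes V: "\<chi> \<in> V_a_1 a d" and mono: "mono_on {1..d} \<chi>"
    and ed: "e \<le> d" and min: "\<And>v. v \<le> d \<Longrightarrow> excess a d \<chi> e \<le> excess a d \<chi> v"
    and last: "\<And>v. e < v \<Longrightarrow> v \<le> d \<Longrightarrow> excess a d \<chi> e < excess a d \<chi> v"
  shows "split_decomp a d \<chi> e"
proof -
  have min_below: "excess a d \<chi> e \<le> excess a d \<chi> v" if "v \<le> e" for v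
    using min that ed by simp
  obtain c1 r1 where c1: "\<forall>i j. 0 \<le> c1 i j \<and> c1 i j \<le> 3/2"
    and r1: "\<forall>m\<in>{0<..e}. - (real a + 2) / 2 \<le> r1 m \<and> r1 m \<le> - real a / 2 \<and>
      \<chi> m + 3/2 * (real d - real e) = root_sum 0 e c1 m + r1 m"
    using lower_block_decomp[OF V mono ed min_below] by blast
  obtain c2 r2 where c2: "\<forall>i j. 0 \<le> c2 i j \<and> c2 i j \<le> 3/2"
    and r2: "\<forall>m\<in>{e<..d}. - real a / 2 < r2 m \<and> r2 m \<le> real a / 2 \<and>
      \<chi> m - 3/2 * real e = root_sum e d c2 m + r2 m"
    using upper_block_decomp[OF V mono ed last] by blast
  define c where "c i j = (if i \<le> e then c1 i j else c2 i j)" for i j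
  define ci where "ci m = (if m \<le> e then r1 m else r2 m)" for m
  have coord: "\<chi> m = (if m \<le> e then root_sum 0 e c m - 3/2 * (real d - real e)
      else root_sum e d c m + 3/2 * real e) + ci m" if m: "m \<in> {1..d}" for m
  proof (cases "m \<le> e")
    case True
    then have "root_sum 0 e c m = root_sum 0 e c1 m"
      unfolding root_sum_def c_def by (intro arg_cong2[where f = minus] sum.cong) auto
    moreover have "\<chi> m + 3/2 * (real d - real e) = root_sum 0 e c1 m + r1 m"
      using r1 m True by auto
    ultimately show ?thesis
      using True unfolding ci_def by simp
  next
    case False
    then have "root_sum e d c m = root_sum e d c2 m"
      unfolding root_sum_def c_def by (intro arg_cong2[where f = minus] sum.cong) auto
    moreover have "\<chi> m - 3/2 * real e = root_sum e d c2 m + r2 m"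
      using r2 m False by auto
    ultimately show ?thesis
      using False unfolding ci_def by simp
  qed
  show ?thesis
    unfolding split_decomp_iff_coords[OF ed]
  proof (intro exI[of _ c] exI[of _ ci] conjI ballI allI impI)
    show "0 \<le> c i j" "c i j \<le> 3/2" for i j
      using c1 c2 unfolding c_def by auto
    show "- (real a + 2) / 2 \<le> ci i" "ci i \<le> - real a / 2" if "i \<in> {1..e}" for i
      using r1 that unfolding ci_def by auto
    show "- real a / 2 < ci i" "ci i \<le> real a / 2" if "i \<in> {e<..d}" for i
      using r2 that unfolding ci_def by auto
  qed (rule coord)
qed

lemma strictly_dominant_imp_mono_on: "strictly_dominant n \<chi> \<Longrightarrow> mono_on {1..n} \<chi>"
  unfolding strictly_dominant_def by (intro strict_mono_on_imp_mono_on strict_mono_onI) auto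

theorem proposition3p4:
  fixes a d :: nat and \<chi> :: "nat \<Rightarrow> real"
  assumes "strictly_dominant d \<chi>"
    and "\<chi> \<in> V_a_1 a d"
  shows "\<exists>!e. e \<le> d \<and>
    (\<exists>(c :: nat \<Rightarrow> nat \<Rightarrow> real) (ci :: nat \<Rightarrow> real).
       (\<forall>i j. 1 \<le> j \<longrightarrow> j < i \<longrightarrow> i \<le> d \<longrightarrow> 0 \<le> c i j \<and> c i j \<le> 3/2) \<and>
       (\<forall>i\<in>{1..e}. - (real a + 2) / 2 \<le> ci i \<and> ci i \<le> - real a / 2) \<and>
       (\<forall>i\<in>{e<..d}. - real a / 2 < ci i \<and> ci i \<le> real a / 2) \<and>
       eqM d \<chi> (\<lambda>m.
           (\<Sum>i\<in>{1..e}. \<Sum>j\<in>{1..<i}. c i j * (beta i m - beta j m))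
         + (\<Sum>i\<in>{e<..d}. \<Sum>j\<in>{e<..<i}. c i j * (beta i m - beta j m))
         + (\<Sum>i\<in>{e<..d}. \<Sum>j\<in>{1..e}. 3/2 * (beta i m - beta j m))
         + (\<Sum>i\<in>{1..d}. ci i * beta i m)))"
  (is "\<exists>!e. ?decomp e")
proof (rule ex_ex1I)
  have mono: "mono_on {1..d} \<chi>"
    using assms(1) by (rule strictly_dominant_imp_mono_on)
  obtain e where "e \<le> d" "\<forall>v\<le>d. excess a d \<chi> e \<le> excess a d \<chi> v"
    "\<forall>v. e < v \<longrightarrow> v \<le> d \<longrightarrow> excess a d \<chi> e < excess a d \<chi> v"
    using ex_last_argmin by blast
  then have "split_decomp a d \<chi> e"
    using split_decomp_at_last_argmin[OF assms(2) mono] by blast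
  with \<open>e \<le> d\<close> show "\<exists>e. ?decomp e"
    unfolding split_decomp_def by blast
next
  fix e1 e2
  assume "?decomp e1" "?decomp e2"
  then show "e1 = e2"
    using split_decomp_unique unfolding split_decomp_def by blast
qed

end
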